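(* In the roundabout exploration process described in the context, for every $t\in[N]$, no two active agents are in the same state after step $t$; i.e., for distinct $a_i,a_j\in A(t)$ we have $s_i(t)\neq s_j(t)$.
   Context: Let $n\ge 2$ and $k$ be natural numbers, $T$ a tree on an $n$-element vertex set $V$, and $N=2(n-1)$. Fix a root $r$ and a DFS tour of $T$ starting and ending at $r$ that traverses each edge of $T$ exactly twice, giving a cyclic vertex sequence $(v_1,\dots,v_N,v_{N+1})$ with $v_{N+1}=v_1=r$, and tour edges $e_i=\{v_i,v_{i+1}\}$ for $i\in[N]$ (each an edge of $T$). For $i,j\in[N]$ the circular interval $[\![i,j]\!]$ is $\{i,i+1,\dots,j\}$ if $i\le j$ and $\{i,\dots,N,1,\dots,j\}$ if $i>j$; $[\![i,j[\![$ denotes $[\![i,j]\!]\setminus\{j\}$. Let $\langle G_1,\dots,G_N\rangle$ be graphs on $V$, each containing all but at most $k$ edges of $T$. Roundabout exploration process: there are agents $a_1,\dots,a_N$ with initial states $s_i(0)=i$. For steps $t=1,\dots,N$: (Movement) for every $i\in[N]$, if $s_i(t-1)=q$ then $s_i(t)=(q\bmod N)+1$ if $e_q\in E(G_t)$, and $s_i(t)=q$ otherwise. Let $D_i(t)=[\![i,s_i(t)]\!]$ (the visited states) and $D_i(0)=\{i\}$. (Elimination) Let $A(0)=\{a_1,\dots,a_N\}$; $A(t)$ is obtained from $A(t-1)$ by repeatedly removing an arbitrary agent $a_i$ of the current set that is redundant, i.e. $D_i(t)\subseteq\bigcup D_j(t)$ over the other agents $a_j$ of the current set, until no redundant agent remains.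 The agents in $A(t)$ are called active after step $t$. *)

theory Defs
  imports Main
begin

definition graph_on :: "'a set \<Rightarrow> 'a set set \<Rightarrow> bool" where
  "graph_on V E \<longleftrightarrow> E \<subseteq> {{x, y} | x y. x \<in> V \<and> y \<in> V \<and> x \<noteq> y}"

definition adj :: "'a set set \<Rightarrow> 'a \<Rightarrow> 'a \<Rightarrow> bool" where
  "adj E u v \<longleftrightarrow> {u, v} \<in> E"

definition is_tree :: "'a set \<Rightarrow> 'a set set \<Rightarrow> bool" where
  "is_tree V E \<longleftrightarrow> graph_on V E
     \<and> (\<forall>u\<in>V. \<forall>w\<in>V. (adj E)\<^sup>*\<^sup>* u w)
     \<and> (\<forall>e\<in>E. \<forall>u w. e = {u, w} \<longrightarrow> \<not> (adj (E - {e}))\<^sup>*\<^sup>* u w)"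

(* closed walk v_1 .. v_{N+1} from r to r traversing every tree edge exactly twice
   (in a tree this is exactly a DFS tour) *)
definition dfs_tour :: "'a set set \<Rightarrow> 'a \<Rightarrow> nat \<Rightarrow> (nat \<Rightarrow> 'a) \<Rightarrow> bool" where
  "dfs_tour E r N v \<longleftrightarrow> v 1 = r \<and> v (N + 1) = r
     \<and> (\<forall>i\<in>{1..N}. {v i, v (Suc i)} \<in> E)
     \<and> (\<forall>e\<in>E. card {i \<in> {1..N}. {v i, v (Suc i)} = e} = 2)"

definition cint :: "nat \<Rightarrow> nat \<Rightarrow> nat \<Rightarrow> nat set" where
  "cint N i j = (if i \<le> j then {i..j} else {i..N} \<union> {1..j})"

fun st :: "nat \<Rightarrow> (nat \<Rightarrow> 'a) \<Rightarrow> (nat \<Rightarrow> 'a set set) \<Rightarrow> nat \<Rightarrow> nat \<Rightarrow> nat" where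
  "st N v G i 0 = i"
| "st N v G i (Suc t) =
     (let q = st N v G i t in if {v q, v (Suc q)} \<in> G (Suc t) then q mod N + 1 else q)"

definition visited :: "nat \<Rightarrow> (nat \<Rightarrow> 'a) \<Rightarrow> (nat \<Rightarrow> 'a set set) \<Rightarrow> nat \<Rightarrow> nat \<Rightarrow> nat set" where
  "visited N v G i t = (if t = 0 then {i} else cint N i (st N v G i t))"

definition redundant :: "(nat \<Rightarrow> nat set) \<Rightarrow> nat set \<Rightarrow> nat \<Rightarrow> bool" where
  "redundant D S i \<longleftrightarrow> i \<in> S \<and> D i \<subseteq> (\<Union>j\<in>S - {i}. D j)"

definition elim_step :: "(nat \<Rightarrow> nat set) \<Rightarrow> nat set \<Rightarrow> nat set \<Rightarrow> bool" where
  "elim_step D S S' \<longleftrightarrow> (\<exists>i. redundant D S i \<and> S' = S - {i})"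

definition elim_result :: "(nat \<Rightarrow> nat set) \<Rightarrow> nat set \<Rightarrow> nat set \<Rightarrow> bool" where
  "elim_result D S S' \<longleftrightarrow> (elim_step D)\<^sup>*\<^sup>* S S' \<and> (\<forall>i\<in>S'. \<not> redundant D S' i)"

end

theory Submission
  imports Defs
begin

(* Two agents in the same state q after step t have visited the circular intervals [[i,q]] and
   [[j,q]], which share their right end point and are therefore nested.  So one of the two agents
   is redundant, which is impossible once elimination has stopped.  Nothing about the tree, the
   tour or the graphs G_t is needed. *)

lemma elim_step_rtranclp_subset: "(elim_step D)\<^sup>*\<^sup>* S S' \<Longrightarrow> S' \<subseteq> S"
  by (induction rule: rtranclp_induct) (auto simp: elim_step_def)

lemma elim_result_subset: "elim_result D S S' \<Longrightarrow> S' \<subseteq> S"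
  unfolding elim_result_def using elim_step_rtranclp_subset by blast

lemma elim_result_not_subset:
  assumes "elim_result D S S'" and "i \<in> S'" and "j \<in> S'" and "i \<noteq> j"
  shows "\<not> D i \<subseteq> D j"
proof
  assume "D i \<subseteq> D j"
  then have "redundant D S' i"
    using assms(2-4) unfolding redundant_def by blast
  with assms(1,2) show False
    unfolding elim_result_def by blast
qed

lemma elim_result_chain_subset:
  fixes t :: nat
  assumes "A 0 \<subseteq> S" and "\<forall>t\<in>{1..N}. elim_result (D t) (A (t - 1)) (A t)"
  shows "t \<le> N \<Longrightarrow> A t \<subseteq> S"
proof (induction t)
  case 0
  show ?case using assms(1) by simp
next
  case (Suc t)
  have "elim_result (D (Suc t)) (A t) (A (Suc t))"
    using assms(2) Suc.prems by force
  then show ?case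
    using elim_result_subset Suc by fastforce
qed

(* Index 0 must be excluded: cint N 0 q contains 0, while cint N j q with j > q does not. *)
lemma cint_same_end_nested:
  assumes "1 \<le> i" and "1 \<le> j"
  shows "cint N i q \<subseteq> cint N j q \<or> cint N j q \<subseteq> cint N i q"
  using assms by (auto simp: cint_def)

lemma visited_same_state_nested:
  assumes "t \<noteq> 0" and "1 \<le> i" and "1 \<le> j" and "st N v G i t = st N v G j t"
  shows "visited N v G i t \<subseteq> visited N v G j t \<or> visited N v G j t \<subseteq> visited N v G i t"
  using assms cint_same_end_nested[OF assms(2,3)] by (simp add: visited_def)

theorem lemma5:
  fixes V :: "'a set" and E :: "'a set set" and r :: 'a and v :: "nat \<Rightarrow> 'a"
    and G :: "nat \<Rightarrow> 'a set set" and n k N :: nat and A :: "nat \<Rightarrow> nat set"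
  assumes "finite V" and "card V = n" and "n \<ge> 2"
    and "is_tree V E" and "r \<in> V"
    and "N = 2 * (n - 1)"
    and "dfs_tour E r N v"
    and "\<forall>t\<in>{1..N}. graph_on V (G t) \<and> card (E - G t) \<le> k"
    and "A 0 = {1..N}"
    and "\<forall>t\<in>{1..N}. elim_result (\<lambda>i. visited N v G i t) (A (t - 1)) (A t)"
  shows "\<forall>t\<in>{1..N}. \<forall>i\<in>A t. \<forall>j\<in>A t. i \<noteq> j \<longrightarrow> st N v G i t \<noteq> st N v G j t"
proof (intro ballI impI notI)
  fix t i j
  assume t: "t \<in> {1..N}" and i: "i \<in> A t" and j: "j \<in> A t" and "i \<noteq> j"
    and same_state: "st N v G i t = st N v G j t"
  have elim: "elim_result (\<lambda>i. visited N v G i t) (A (t - 1)) (A t)"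
    using assms(10) t by blast
  have "A t \<subseteq> {1..N}"
    using elim_result_chain_subset[of A, OF _ assms(10)] assms(9) t by simp
  then have "1 \<le> i" and "1 \<le> j"
    using i j by auto
  moreover have "t \<noteq> 0"
    using t by simp
  ultimately
  have "visited N v G i t \<subseteq> visited N v G j t \<or> visited N v G j t \<subseteq> visited N v G i t"
    using visited_same_state_nested same_state by blast
  then show False
    using elim_result_not_subset[OF elim] i j \<open>i \<noteq> j\<close> by blast
qed

end
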